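(* For $\sigma>0$ let $\mathcal H_\sigma$ denote the RKHS of the Gaussian kernel $k_\sigma(x,y) = \exp(-\|x-y\|^2/(2\sigma^2))$ on $\mathbb R^d$, with norm $\|\cdot\|_\sigma$. Let $x_1,\dots,x_n\in\mathbb R^d$, $a,b\in\mathbb R^n$, $f = \sum_{i=1}^n a_i k_\sigma(x_i,\cdot)$ and $g = \sum_{i=1}^n b_i k_\sigma(x_i,\cdot)$. Let $K$ be the $n\times n$ matrix with $K_{ij} = k_{\sqrt2\sigma}(x_i,x_j)$, and let $D_a = \operatorname{diag}(a)$, $D_b = \operatorname{diag}(b)$. Then $$\|fg\|_{\sigma/\sqrt2}^2 = \operatorname{tr}\big((D_aK)^2(D_bK)^2\big).$$ *)

theory Defs
  imports "HOL-Analysis.Euclidean_Space" "Jordan_Normal_Form.Matrix"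
begin

definition gauss_kernel :: "real \<Rightarrow> 'a::euclidean_space \<Rightarrow> 'a \<Rightarrow> real" where
  "gauss_kernel \<sigma> x y = exp (- (norm (x - y))\<^sup>2 / (2 * \<sigma>\<^sup>2))"

text \<open>Norm of a function in the reproducing kernel Hilbert space of a positive
  definite kernel k (Aronszajn): the supremum of |sum c_i f(z_i)| over all finite
  families with sum c_i c_j k(z_i,z_j) <= 1.  For f in the RKHS this equals its
  RKHS norm (the evaluation functionals' combinations are dense, and
  sum c_i f(z_i) = <f, sum c_i k(z_i,.)>).\<close>
definition rkhs_norm :: "('a \<Rightarrow> 'a \<Rightarrow> real) \<Rightarrow> ('a \<Rightarrow> real) \<Rightarrow> real" where
  "rkhs_norm k f = Sup {\<bar>\<Sum>i<m. c i * f (z i)\<bar> | (m::nat) c z.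
      (\<Sum>i<m. \<Sum>j<m. c i * c j * k (z i) (z j)) \<le> 1}"

definition trace :: "'a::comm_ring_1 mat \<Rightarrow> 'a" where
  "trace A = (\<Sum>i<dim_row A. A $$ (i, i))"

definition in_rkhs :: "('a \<Rightarrow> 'a \<Rightarrow> real) \<Rightarrow> ('a \<Rightarrow> real) \<Rightarrow> bool" where
  "in_rkhs k f \<longleftrightarrow> bdd_above {\<bar>\<Sum>i<m. c i * f (z i)\<bar> | (m::nat) c z.
      (\<Sum>i<m. \<Sum>j<m. c i * c j * k (z i) (z j)) \<le> 1}"

end

theory Submission
  imports Defs
begin

(* Since k_\<sigma>(u,y) k_\<sigma>(v,y) = k_{\<surd>2\<sigma>}(u,v) k_{\<sigma>/\<surd>2}((u+v)/2, y), the product fg is the finite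
   kernel expansion \<Sum>_{i,j} a_i b_j K_ij k_{\<sigma>/\<surd>2}((x_i+x_j)/2, .) in H_{\<sigma>/\<surd>2}.  The squared
   RKHS norm of a finite expansion \<Sum>_p d_p k(w_p, .) of a positive semidefinite kernel is its
   Gram form \<Sum>_{p,q} d_p d_q k(w_p, w_q): Cauchy-Schwarz for the kernel bounds every test value
   by its square root, and the normalised coefficients attain it.  A four-point identity for
   Gaussians turns each Gram term into a_i b_j a_k b_l K_ik K_kj K_jl K_li, which sums to the
   trace of (D_a K)^2 (D_b K)^2.  The Gaussian kernel is positive semidefinite because, after
   rescaling by exp(-c|x|^2) exp(-c|y|^2), it is exp(2c<x,y>), a nonnegative series in powers
   of the inner product, which are positive semidefinite by the Schur product theorem. *)

definition psd_kernel :: "('a \<Rightarrow> 'a \<Rightarrow> real) \<Rightarrow> bool" where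
  "psd_kernel k \<longleftrightarrow> (\<forall>(m::nat) c z. 0 \<le> (\<Sum>i<m. \<Sum>j<m. c i * c j * k (z i) (z j)))"

definition rkhs_test_values :: "('a \<Rightarrow> 'a \<Rightarrow> real) \<Rightarrow> ('a \<Rightarrow> real) \<Rightarrow> real set" where
  "rkhs_test_values k f = {\<bar>\<Sum>i<m. c i * f (z i)\<bar> | (m::nat) c z.
      (\<Sum>i<m. \<Sum>j<m. c i * c j * k (z i) (z j)) \<le> 1}"

lemma rkhs_norm_eq_Sup: "rkhs_norm k f = Sup (rkhs_test_values k f)"
  unfolding rkhs_norm_def rkhs_test_values_def ..

lemma in_rkhs_iff_bdd_above: "in_rkhs k f \<longleftrightarrow> bdd_above (rkhs_test_values k f)"
  unfolding in_rkhs_def rkhs_test_values_def ..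

lemma sum_sum_reindex_bij_betw:
  assumes "bij_betw \<phi> S T"
  shows "(\<Sum>i\<in>S. \<Sum>j\<in>S. F (\<phi> i) (\<phi> j)) = (\<Sum>\<alpha>\<in>T. \<Sum>\<beta>\<in>T. F \<alpha> \<beta>)"
proof -
  have "(\<Sum>i\<in>S. \<Sum>j\<in>S. F (\<phi> i) (\<phi> j)) = (\<Sum>i\<in>S. \<Sum>\<beta>\<in>T. F (\<phi> i) \<beta>)"
    by (intro sum.cong refl sum.reindex_bij_betw[OF assms])
  also have "\<dots> = (\<Sum>\<alpha>\<in>T. \<Sum>\<beta>\<in>T. F \<alpha> \<beta>)"
    by (rule sum.reindex_bij_betw[OF assms])
  finally show ?thesis .
qed

lemma psd_kernel_sum:
  assumes "psd_kernel k" and "finite I"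
  shows "0 \<le> (\<Sum>i\<in>I. \<Sum>j\<in>I. c i * c j * k (z i) (z j))"
proof -
  obtain \<phi> where \<phi>: "bij_betw \<phi> {..<card I} I"
    using ex_bij_betw_nat_finite[OF assms(2)] by (auto simp: atLeast0LessThan)
  have "0 \<le> (\<Sum>i<card I. \<Sum>j<card I. c (\<phi> i) * c (\<phi> j) * k (z (\<phi> i)) (z (\<phi> j)))"
    using assms(1) unfolding psd_kernel_def by (elim allE)
  also have "\<dots> = (\<Sum>i\<in>I. \<Sum>j\<in>I. c i * c j * k (z i) (z j))"
    by (rule sum_sum_reindex_bij_betw[OF \<phi>, of "\<lambda>\<alpha> \<beta>. c \<alpha> * c \<beta> * k (z \<alpha>) (z \<beta>)"])
  finally show ?thesis .
qed

lemma quadratic_nonneg_discriminant: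
  fixes A B C :: real
  assumes nonneg: "\<And>t. 0 \<le> A * t\<^sup>2 + 2 * B * t + C" and "0 \<le> A"
  shows "B\<^sup>2 \<le> A * C"
proof (cases "A = 0")
  case True
  show ?thesis
  proof (rule ccontr)
    assume "\<not> ?thesis"
    then have "B \<noteq> 0" using True by simp
    have "0 \<le> 2 * B * (- (C + 1) / (2 * B)) + C"
      using nonneg[of "- (C + 1) / (2 * B)"] True by simp
    also have "\<dots> = -1" using \<open>B \<noteq> 0\<close> by (simp add: field_simps)
    finally show False by simp
  qed
next
  case False
  then have "A > 0" using assms(2) by simp
  have "0 \<le> A * (- B / A)\<^sup>2 + 2 * B * (- B / A) + C" by (rule nonneg)
  also have "\<dots> = (A * C - B\<^sup>2) / A" using \<open>A > 0\<close> by (simp add: field_simps power2_eq_square)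
  finally show ?thesis using \<open>A > 0\<close> by (simp add: zero_le_divide_iff)
qed

lemma psd_kernel_cauchy_schwarz:
  assumes "psd_kernel k" and sym: "\<And>x y. k x y = k y x" and "finite I" and "finite J"
  shows "(\<Sum>i\<in>I. \<Sum>j\<in>J. c i * d j * k (z i) (w j))\<^sup>2
    \<le> (\<Sum>i\<in>I. \<Sum>i'\<in>I. c i * c i' * k (z i) (z i')) * (\<Sum>j\<in>J. \<Sum>j'\<in>J. d j * d j' * k (w j) (w j'))"
    (is "?B\<^sup>2 \<le> ?C * ?D")
proof (rule quadratic_nonneg_discriminant)
  show "0 \<le> ?C"
    by (rule psd_kernel_sum[OF assms(1,3)])
next
  fix t
  let ?e = "case_sum (\<lambda>i. t * c i) d" and ?p = "case_sum z w"
  have "0 \<le> (\<Sum>p\<in>I <+> J. \<Sum>q\<in>I <+> J. ?e p * ?e q * k (?p p) (?p q))"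
    using assms(3,4) by (intro psd_kernel_sum[OF assms(1)]) simp
  also have "\<dots> = (\<Sum>i\<in>I. \<Sum>i'\<in>I. (t * c i) * (t * c i') * k (z i) (z i'))
      + (\<Sum>i\<in>I. \<Sum>j\<in>J. (t * c i) * d j * k (z i) (w j))
      + (\<Sum>j\<in>J. \<Sum>i\<in>I. d j * (t * c i) * k (w j) (z i))
      + ?D"
    using assms(3,4) by (simp add: sum.Plus sum.distrib)
  also have "(\<Sum>i\<in>I. \<Sum>i'\<in>I. (t * c i) * (t * c i') * k (z i) (z i')) = ?C * t\<^sup>2"
    by (simp add: sum_distrib_left power2_eq_square mult_ac)
  also have "(\<Sum>i\<in>I. \<Sum>j\<in>J. (t * c i) * d j * k (z i) (w j)) = ?B * t"
    by (simp add: sum_distrib_left mult_ac)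
  also have "(\<Sum>j\<in>J. \<Sum>i\<in>I. d j * (t * c i) * k (w j) (z i)) = ?B * t"
    by (subst sum.swap) (simp add: sum_distrib_left mult_ac sym[of "w _"])
  finally show "0 \<le> ?C * t\<^sup>2 + 2 * ?B * t + ?D"
    by (simp add: algebra_simps)
qed

lemma kernel_expansion_test_value_le:
  fixes m :: nat
  assumes "psd_kernel k" and sym: "\<And>x y. k x y = k y x" and "finite I"
    and normed: "(\<Sum>i<m. \<Sum>j<m. c i * c j * k (z i) (z j)) \<le> 1"
  shows "\<bar>\<Sum>i<m. c i * (\<Sum>\<alpha>\<in>I. d \<alpha> * k (w \<alpha>) (z i))\<bar>
    \<le> sqrt (\<Sum>\<alpha>\<in>I. \<Sum>\<beta>\<in>I. d \<alpha> * d \<beta> * k (w \<alpha>) (w \<beta>))"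
proof -
  have "(\<Sum>i<m. c i * (\<Sum>\<alpha>\<in>I. d \<alpha> * k (w \<alpha>) (z i)))\<^sup>2
      = (\<Sum>i<m. \<Sum>\<alpha>\<in>I. c i * d \<alpha> * k (z i) (w \<alpha>))\<^sup>2"
    by (simp add: sum_distrib_left mult_ac sym[of "w _"])
  also have "\<dots> \<le> (\<Sum>i<m. \<Sum>j<m. c i * c j * k (z i) (z j))
      * (\<Sum>\<alpha>\<in>I. \<Sum>\<beta>\<in>I. d \<alpha> * d \<beta> * k (w \<alpha>) (w \<beta>))"
    by (rule psd_kernel_cauchy_schwarz[OF assms(1,2) finite_lessThan assms(3)])
  also have "\<dots> \<le> (\<Sum>\<alpha>\<in>I. \<Sum>\<beta>\<in>I. d \<alpha> * d \<beta> * k (w \<alpha>) (w \<beta>))"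
    using mult_left_le_one_le[OF psd_kernel_sum[OF assms(1,3)] psd_kernel_sum[OF assms(1)] normed]
    by simp
  finally show ?thesis by (simp add: real_le_rsqrt)
qed

lemma sqrt_gram_in_rkhs_test_values:
  assumes "psd_kernel k" and "finite I"
  shows "sqrt (\<Sum>\<alpha>\<in>I. \<Sum>\<beta>\<in>I. d \<alpha> * d \<beta> * k (w \<alpha>) (w \<beta>))
    \<in> rkhs_test_values k (\<lambda>y. \<Sum>\<alpha>\<in>I. d \<alpha> * k (w \<alpha>) y)"
    (is "sqrt ?Q \<in> rkhs_test_values k ?h")
proof (cases "?Q = 0")
  case True
  have "0 \<in> rkhs_test_values k ?h"
    unfolding rkhs_test_values_def by (intro CollectI exI[of _ 0]) simp
  then show ?thesis using True by simp
next
  case False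
  then have "?Q > 0" using psd_kernel_sum[OF assms, of d w] by simp
  obtain \<phi> where \<phi>: "bij_betw \<phi> {..<card I} I"
    using ex_bij_betw_nat_finite[OF assms(2)] by (auto simp: atLeast0LessThan)
  define r where "r = inverse (sqrt ?Q)"
  define c where "c i = r * d (\<phi> i)" for i
  define z where "z i = w (\<phi> i)" for i
  have "(\<Sum>i<card I. \<Sum>j<card I. c i * c j * k (z i) (z j))
      = (\<Sum>\<alpha>\<in>I. \<Sum>\<beta>\<in>I. (r * d \<alpha>) * (r * d \<beta>) * k (w \<alpha>) (w \<beta>))"
    unfolding c_def z_def
    by (rule sum_sum_reindex_bij_betw[OF \<phi>, of "\<lambda>\<alpha> \<beta>. (r * d \<alpha>) * (r * d \<beta>) * k (w \<alpha>) (w \<beta>)"])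
  also have "\<dots> = r\<^sup>2 * ?Q"
    by (simp add: sum_distrib_left power2_eq_square mult_ac)
  also have "\<dots> = 1"
    using \<open>?Q > 0\<close> by (simp add: r_def power_inverse)
  finally have normed: "(\<Sum>i<card I. \<Sum>j<card I. c i * c j * k (z i) (z j)) \<le> 1" by simp
  have "(\<Sum>i<card I. c i * ?h (z i)) = (\<Sum>\<alpha>\<in>I. r * d \<alpha> * ?h (w \<alpha>))"
    unfolding c_def z_def by (rule sum.reindex_bij_betw[OF \<phi>, of "\<lambda>\<alpha>. r * d \<alpha> * ?h (w \<alpha>)"])
  also have "\<dots> = r * (\<Sum>\<alpha>\<in>I. d \<alpha> * ?h (w \<alpha>))"
    by (simp only: sum_distrib_left mult.assoc)
  also have "(\<Sum>\<alpha>\<in>I. d \<alpha> * ?h (w \<alpha>)) = (\<Sum>\<alpha>\<in>I. \<Sum>\<beta>\<in>I. d \<beta> * d \<alpha> * k (w \<beta>) (w \<alpha>))"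
    by (simp add: sum_distrib_left mult_ac)
  also have "\<dots> = ?Q"
    by (rule sum.swap)
  also have "r * ?Q = sqrt ?Q"
    using \<open>?Q > 0\<close> by (simp add: r_def field_simps)
  finally have "sqrt ?Q = \<bar>\<Sum>i<card I. c i * ?h (z i)\<bar>"
    using \<open>?Q > 0\<close> by simp
  with normed show ?thesis
    unfolding rkhs_test_values_def by (intro CollectI exI[of _ "card I"] exI[of _ c] exI[of _ z]) simp
qed

lemma rkhs_norm_kernel_expansion:
  assumes "psd_kernel k" and "\<And>x y. k x y = k y x" and "finite I"
  shows "in_rkhs k (\<lambda>y. \<Sum>\<alpha>\<in>I. d \<alpha> * k (w \<alpha>) y)
    \<and> rkhs_norm k (\<lambda>y. \<Sum>\<alpha>\<in>I. d \<alpha> * k (w \<alpha>) y)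
      = sqrt (\<Sum>\<alpha>\<in>I. \<Sum>\<beta>\<in>I. d \<alpha> * d \<beta> * k (w \<alpha>) (w \<beta>))"
    (is "in_rkhs k ?h \<and> rkhs_norm k ?h = sqrt ?Q")
proof -
  have le: "s \<le> sqrt ?Q" if "s \<in> rkhs_test_values k ?h" for s
    using that unfolding rkhs_test_values_def mem_Collect_eq
    by (elim exE conjE) (simp add: kernel_expansion_test_value_le[OF assms])
  have "sqrt ?Q \<in> rkhs_test_values k ?h"
    by (rule sqrt_gram_in_rkhs_test_values[OF assms(1,3)])
  then show ?thesis
    unfolding in_rkhs_iff_bdd_above rkhs_norm_eq_Sup
    using bdd_aboveI[of _ "sqrt ?Q", OF le] cSup_eq_maximum[of "sqrt ?Q", OF _ le] by simp
qed

lemma psd_inner_power: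
  fixes z :: "'i \<Rightarrow> 'a::euclidean_space"
  assumes "finite I"
  shows "0 \<le> (\<Sum>i\<in>I. \<Sum>j\<in>I. e i * e j * (inner (z i) (z j)) ^ n)"
proof (induction n arbitrary: e)
  case 0
  have "(\<Sum>i\<in>I. \<Sum>j\<in>I. e i * e j * (inner (z i) (z j)) ^ 0) = (\<Sum>i\<in>I. e i) * (\<Sum>j\<in>I. e j)"
    by (simp add: sum_product)
  then show ?case by simp
next
  case (Suc n)
  \<comment> \<open>Schur product: expanding one factor of the inner product in a basis.\<close>
  have "(\<Sum>i\<in>I. \<Sum>j\<in>I. e i * e j * (inner (z i) (z j)) ^ Suc n)
     = (\<Sum>i\<in>I. \<Sum>j\<in>I. \<Sum>b\<in>Basis.
          (e i * inner (z i) b) * (e j * inner (z j) b) * (inner (z i) (z j)) ^ n)"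
    by (simp add: euclidean_inner[of "z _" "z _"] sum_distrib_left sum_distrib_right mult_ac)
  also have "\<dots> = (\<Sum>b\<in>Basis. \<Sum>i\<in>I. \<Sum>j\<in>I.
          (e i * inner (z i) b) * (e j * inner (z j) b) * (inner (z i) (z j)) ^ n)"
    by (simp only: sum.swap[of _ _ Basis])
  also have "\<dots> \<ge> 0"
    by (rule sum_nonneg) (rule Suc)
  finally show ?case .
qed

lemma psd_exp_inner:
  fixes z :: "'i \<Rightarrow> 'a::euclidean_space"
  assumes "finite I" and "0 \<le> t"
  shows "0 \<le> (\<Sum>i\<in>I. \<Sum>j\<in>I. e i * e j * exp (t * inner (z i) (z j)))"
proof -
  have series: "(\<lambda>n. \<Sum>i\<in>I. \<Sum>j\<in>I. e i * e j * ((t * inner (z i) (z j)) ^ n /\<^sub>R fact n))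
      sums (\<Sum>i\<in>I. \<Sum>j\<in>I. e i * e j * exp (t * inner (z i) (z j)))"
    by (intro sums_sum sums_mult exp_converges)
  have terms: "0 \<le> (\<Sum>i\<in>I. \<Sum>j\<in>I. e i * e j * ((t * inner (z i) (z j)) ^ n /\<^sub>R fact n))" for n
  proof -
    have "(\<Sum>i\<in>I. \<Sum>j\<in>I. e i * e j * ((t * inner (z i) (z j)) ^ n /\<^sub>R fact n))
       = (t ^ n / fact n) * (\<Sum>i\<in>I. \<Sum>j\<in>I. e i * e j * (inner (z i) (z j)) ^ n)"
      by (simp add: sum_distrib_left power_mult_distrib field_simps)
    also have "\<dots> \<ge> 0" using psd_inner_power[OF assms(1), of e z n] assms(2) by simp
    finally show ?thesis .
  qed
  show ?thesis
    using sums_le[OF terms sums_zero series] by simp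
qed

lemma gauss_kernel_commute: "gauss_kernel s x y = gauss_kernel s y x"
  unfolding gauss_kernel_def by (simp add: norm_minus_commute)

lemma gauss_kernel_factor:
  fixes s :: real and x y :: "'a::euclidean_space"
  defines "c \<equiv> 1 / (2 * s\<^sup>2)"
  shows "gauss_kernel s x y = exp (- c * (norm x)\<^sup>2) * exp (- c * (norm y)\<^sup>2) * exp (2 * c * inner x y)"
proof -
  have "(norm (x - y))\<^sup>2 = (norm x)\<^sup>2 + (norm y)\<^sup>2 - 2 * inner x y"
    by (simp add: power2_norm_eq_inner inner_diff_left inner_diff_right inner_commute)
  then have "- (norm (x - y))\<^sup>2 / (2 * s\<^sup>2) = - c * (norm x)\<^sup>2 + - c * (norm y)\<^sup>2 + 2 * c * inner x y"
    unfolding c_def by (simp add: diff_divide_distrib add_divide_distrib)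
  then show ?thesis
    unfolding gauss_kernel_def by (simp add: exp_add[symmetric])
qed

lemma psd_kernel_gauss: "psd_kernel (gauss_kernel s)"
  unfolding psd_kernel_def
proof (intro allI)
  fix m :: nat and c :: "nat \<Rightarrow> real" and z :: "nat \<Rightarrow> 'a"
  define \<gamma> :: real where "\<gamma> = 1 / (2 * s\<^sup>2)"
  define e where "e i = c i * exp (- \<gamma> * (norm (z i))\<^sup>2)" for i
  have "(\<Sum>i<m. \<Sum>j<m. c i * c j * gauss_kernel s (z i) (z j))
      = (\<Sum>i<m. \<Sum>j<m. e i * e j * exp ((2 * \<gamma>) * inner (z i) (z j)))"
    unfolding gauss_kernel_factor e_def \<gamma>_def by (simp add: mult_ac)
  also have "\<dots> \<ge> 0"
    by (rule psd_exp_inner) (auto simp: \<gamma>_def)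
  finally show "0 \<le> (\<Sum>i<m. \<Sum>j<m. c i * c j * gauss_kernel s (z i) (z j))" .
qed

lemma gauss_kernel_rescaled:
  fixes \<sigma> :: real
  defines "\<gamma> \<equiv> 1 / (4 * \<sigma>\<^sup>2)"
  shows "gauss_kernel \<sigma> p q = exp (- (2 * (norm (p - q))\<^sup>2) * \<gamma>)"
    and "gauss_kernel (sqrt 2 * \<sigma>) p q = exp (- (norm (p - q))\<^sup>2 * \<gamma>)"
    and "gauss_kernel (\<sigma> / sqrt 2) p q = exp (- (4 * (norm (p - q))\<^sup>2) * \<gamma>)"
proof -
  have "(sqrt 2 * \<sigma>)\<^sup>2 = 2 * \<sigma>\<^sup>2" and "(\<sigma> / sqrt 2)\<^sup>2 = \<sigma>\<^sup>2 / 2"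
    by (simp_all add: power_mult_distrib power_divide)
  then show "gauss_kernel \<sigma> p q = exp (- (2 * (norm (p - q))\<^sup>2) * \<gamma>)"
    and "gauss_kernel (sqrt 2 * \<sigma>) p q = exp (- (norm (p - q))\<^sup>2 * \<gamma>)"
    and "gauss_kernel (\<sigma> / sqrt 2) p q = exp (- (4 * (norm (p - q))\<^sup>2) * \<gamma>)"
    unfolding gauss_kernel_def \<gamma>_def by (simp_all add: field_simps)
qed

lemma norm_midpoint_identity:
  fixes u v y :: "'a::real_inner"
  shows "2 * (norm (u - y))\<^sup>2 + 2 * (norm (v - y))\<^sup>2
    = (norm (u - v))\<^sup>2 + 4 * (norm ((1/2) *\<^sub>R (u + v) - y))\<^sup>2"
  by (simp add: power2_norm_eq_inner inner_add_left inner_add_right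
      inner_diff_left inner_diff_right inner_commute algebra_simps)

lemma norm_four_point_identity:
  fixes A B C D :: "'a::real_inner"
  shows "(norm (A - B))\<^sup>2 + (norm (C - D))\<^sup>2 + 4 * (norm ((1/2) *\<^sub>R (A + B) - (1/2) *\<^sub>R (C + D)))\<^sup>2
    = (norm (A - C))\<^sup>2 + (norm (C - B))\<^sup>2 + (norm (B - D))\<^sup>2 + (norm (D - A))\<^sup>2"
  by (simp add: power2_norm_eq_inner inner_add_left inner_add_right
      inner_diff_left inner_diff_right inner_commute algebra_simps)

lemma gauss_kernel_mult:
  "gauss_kernel \<sigma> u y * gauss_kernel \<sigma> v y
    = gauss_kernel (sqrt 2 * \<sigma>) u v * gauss_kernel (\<sigma> / sqrt 2) ((1/2) *\<^sub>R (u + v)) y"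
proof -
  let ?\<gamma> = "1 / (4 * \<sigma>\<^sup>2)"
  have "- (2 * (norm (u - y))\<^sup>2) * ?\<gamma> + - (2 * (norm (v - y))\<^sup>2) * ?\<gamma>
      = - (2 * (norm (u - y))\<^sup>2 + 2 * (norm (v - y))\<^sup>2) * ?\<gamma>"
    by (simp only: distrib_right minus_add_distrib)
  also have "\<dots> = - ((norm (u - v))\<^sup>2 + 4 * (norm ((1/2) *\<^sub>R (u + v) - y))\<^sup>2) * ?\<gamma>"
    unfolding norm_midpoint_identity ..
  also have "\<dots> = - (norm (u - v))\<^sup>2 * ?\<gamma> + - (4 * (norm ((1/2) *\<^sub>R (u + v) - y))\<^sup>2) * ?\<gamma>"
    by (simp only: distrib_right minus_add_distrib)
  finally show ?thesis
    unfolding gauss_kernel_rescaled(2,3) unfolding gauss_kernel_rescaled(1) exp_add[symmetric] by simp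
qed

lemma gauss_kernel_four_point:
  "gauss_kernel (sqrt 2 * \<sigma>) A B * gauss_kernel (sqrt 2 * \<sigma>) C D
      * gauss_kernel (\<sigma> / sqrt 2) ((1/2) *\<^sub>R (A + B)) ((1/2) *\<^sub>R (C + D))
    = gauss_kernel (sqrt 2 * \<sigma>) A C * gauss_kernel (sqrt 2 * \<sigma>) C B
      * gauss_kernel (sqrt 2 * \<sigma>) B D * gauss_kernel (sqrt 2 * \<sigma>) D A"
proof -
  let ?\<gamma> = "1 / (4 * \<sigma>\<^sup>2)"
  have "- (norm (A - B))\<^sup>2 * ?\<gamma> + - (norm (C - D))\<^sup>2 * ?\<gamma>
        + - (4 * (norm ((1/2) *\<^sub>R (A + B) - (1/2) *\<^sub>R (C + D)))\<^sup>2) * ?\<gamma>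
      = - ((norm (A - B))\<^sup>2 + (norm (C - D))\<^sup>2
        + 4 * (norm ((1/2) *\<^sub>R (A + B) - (1/2) *\<^sub>R (C + D)))\<^sup>2) * ?\<gamma>"
    by (simp only: distrib_right minus_add_distrib)
  also have "\<dots> = - ((norm (A - C))\<^sup>2 + (norm (C - B))\<^sup>2 + (norm (B - D))\<^sup>2 + (norm (D - A))\<^sup>2) * ?\<gamma>"
    unfolding norm_four_point_identity ..
  also have "\<dots> = - (norm (A - C))\<^sup>2 * ?\<gamma> + - (norm (C - B))\<^sup>2 * ?\<gamma>
        + - (norm (B - D))\<^sup>2 * ?\<gamma> + - (norm (D - A))\<^sup>2 * ?\<gamma>"
    by (simp only: distrib_right minus_add_distrib)
  finally show ?thesis
    unfolding gauss_kernel_rescaled(2,3) exp_add[symmetric] by simp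
qed

lemma gauss_expansion_mult:
  "(\<Sum>i\<in>I. a i * gauss_kernel \<sigma> (x i) y) * (\<Sum>j\<in>I. b j * gauss_kernel \<sigma> (x j) y)
    = (\<Sum>(i, j)\<in>I \<times> I. (a i * b j * gauss_kernel (sqrt 2 * \<sigma>) (x i) (x j))
        * gauss_kernel (\<sigma> / sqrt 2) ((1/2) *\<^sub>R (x i + x j)) y)"
  by (simp add: sum_product sum.cartesian_product gauss_kernel_mult mult_ac)

lemma gauss_expansion_mult_gram:
  "(\<Sum>(i, j)\<in>I \<times> I. \<Sum>(k, l)\<in>I \<times> I.
      (a i * b j * gauss_kernel (sqrt 2 * \<sigma>) (x i) (x j))
      * (a k * b l * gauss_kernel (sqrt 2 * \<sigma>) (x k) (x l))
      * gauss_kernel (\<sigma> / sqrt 2) ((1/2) *\<^sub>R (x i + x j)) ((1/2) *\<^sub>R (x k + x l)))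
    = (\<Sum>i\<in>I. \<Sum>j\<in>I. \<Sum>k\<in>I. \<Sum>l\<in>I. a i * b j * a k * b l
        * (gauss_kernel (sqrt 2 * \<sigma>) (x i) (x k) * gauss_kernel (sqrt 2 * \<sigma>) (x k) (x j)
          * gauss_kernel (sqrt 2 * \<sigma>) (x j) (x l) * gauss_kernel (sqrt 2 * \<sigma>) (x l) (x i)))"
proof -
  have four_point: "(a i * b j * gauss_kernel (sqrt 2 * \<sigma>) (x i) (x j))
      * (a k * b l * gauss_kernel (sqrt 2 * \<sigma>) (x k) (x l))
      * gauss_kernel (\<sigma> / sqrt 2) ((1/2) *\<^sub>R (x i + x j)) ((1/2) *\<^sub>R (x k + x l))
    = a i * b j * a k * b l
      * (gauss_kernel (sqrt 2 * \<sigma>) (x i) (x k) * gauss_kernel (sqrt 2 * \<sigma>) (x k) (x j)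
        * gauss_kernel (sqrt 2 * \<sigma>) (x j) (x l) * gauss_kernel (sqrt 2 * \<sigma>) (x l) (x i))"
    for i j k l
    using gauss_kernel_four_point[of \<sigma> "x i" "x j" "x k" "x l"] by (simp add: mult_ac)
  show ?thesis
    by (simp only: sum.cartesian_product[symmetric] split_conv four_point)
qed

lemma trace_diag_mult_square:
  "trace ((mat_diag n a * mat n n (\<lambda>(i, j). G i j)) ^\<^sub>m 2 * (mat_diag n b * mat n n (\<lambda>(i, j). G i j)) ^\<^sub>m 2)
    = (\<Sum>i<n. \<Sum>j<n. \<Sum>k<n. \<Sum>l<n. a i * b j * a k * b l * (G i k * G k j * G j l * G l i))"
proof -
  have square: "(mat n n (\<lambda>(i, j). M i j)) ^\<^sub>m 2 = mat n n (\<lambda>(i, j). \<Sum>k<n. M i k * M k j)" for M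
    by (rule eq_matI) (auto simp: numeral_2_eq_2 scalar_prod_def atLeast0LessThan)
  have diag: "mat_diag n c * mat n n (\<lambda>(i, j). G i j) = mat n n (\<lambda>(i, j). c i * G i j)" for c
    by (subst mat_diag_mult_left[of _ n n]) auto
  show ?thesis
    unfolding diag square trace_def
    by (simp add: scalar_prod_def atLeast0LessThan sum_product mult_ac)
qed

theorem corollary4:
  fixes \<sigma> :: real and n :: nat
    and x :: "nat \<Rightarrow> 'a::euclidean_space"
    and a b :: "nat \<Rightarrow> real"
    and f g :: "'a \<Rightarrow> real"
    and K Da Db :: "real mat"
  assumes "\<sigma> > 0"
    and "f = (\<lambda>y. \<Sum>i<n. a i * gauss_kernel \<sigma> (x i) y)"
    and "g = (\<lambda>y. \<Sum>i<n. b i * gauss_kernel \<sigma> (x i) y)"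
    and "K = mat n n (\<lambda>(i, j). gauss_kernel (sqrt 2 * \<sigma>) (x i) (x j))"
    and "Da = mat n n (\<lambda>(i, j). if i = j then a i else 0)"
    and "Db = mat n n (\<lambda>(i, j). if i = j then b i else 0)"
  shows "in_rkhs (gauss_kernel (\<sigma> / sqrt 2)) (\<lambda>y. f y * g y) \<and>
         (rkhs_norm (gauss_kernel (\<sigma> / sqrt 2)) (\<lambda>y. f y * g y))\<^sup>2
           = trace ((Da * K) ^\<^sub>m 2 * (Db * K) ^\<^sub>m 2)"
proof -
  \<comment> \<open>The identities used hold for every real \<sigma>.\<close>
  let ?k = "gauss_kernel (\<sigma> / sqrt 2)" and ?I = "{..<n} \<times> {..<n}"
  define d where "d = (\<lambda>(i, j). a i * b j * gauss_kernel (sqrt 2 * \<sigma>) (x i) (x j))"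
  define w where "w = (\<lambda>(i, j). (1/2) *\<^sub>R (x i + x j))"
  have fg: "(\<lambda>y. f y * g y) = (\<lambda>y. \<Sum>p\<in>?I. d p * ?k (w p) y)"
    by (simp add: assms(2,3) gauss_expansion_mult d_def w_def split_def)
  have Da: "Da = mat_diag n a" and Db: "Db = mat_diag n b"
    by (auto simp: assms(5,6) mat_diag_def)
  have "(\<Sum>p\<in>?I. \<Sum>q\<in>?I. d p * d q * ?k (w p) (w q)) = trace ((Da * K) ^\<^sub>m 2 * (Db * K) ^\<^sub>m 2)"
    unfolding Da Db assms(4) trace_diag_mult_square
    using gauss_expansion_mult_gram[of a b \<sigma> x "{..<n}"] by (simp add: d_def w_def split_def)
  moreover have "0 \<le> (\<Sum>p\<in>?I. \<Sum>q\<in>?I. d p * d q * ?k (w p) (w q))"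
    by (simp add: psd_kernel_sum psd_kernel_gauss)
  ultimately show ?thesis
    using rkhs_norm_kernel_expansion[OF psd_kernel_gauss gauss_kernel_commute,
        where I = ?I and d = d and w = w] fg
    by simp
qed

end
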